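(* If the finite symmetric two-player game $(X,\pi)$ has no finite population evolutionary stable strategy (fESS), then imitation is subject to a money pump.
   Context: A symmetric two-player game $(X,\pi)$ has common action set $X$ and payoff $\pi:X\times X\to\mathbb{R}$ ($\pi(x,y)$ = payoff of the player choosing $x$ against $y$). An action $x^*\in X$ is a fESS if $\pi(x^*,x)\ge\pi(x,x^* )$ for all $x\in X$. Relative payoff: $\Delta(x,y)=\pi(x,y)-\pi(y,x)$. Imitate-the-best: given initial $y_0\in X$ and any opponent sequence $(x_t)_{t\ge0}$, $y_t=x_{t-1}$ if $\Delta(x_{t-1},y_{t-1})>0$ and $y_t=y_{t-1}$ otherwise. Imitation is not subject to a money pump if there is $M\in\mathbb{R}_+$ such that for every $y_0\in X$ and every sequence $(x_t)$, $\limsup_{T\to\infty}\sum_{t=0}^T\Delta(x_t,y_t)\le M$; otherwise it is subject to a money pump. *)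

theory Defs
  imports "HOL-Analysis.Analysis"
begin

definition is_fESS :: "'a set \<Rightarrow> ('a \<Rightarrow> 'a \<Rightarrow> real) \<Rightarrow> 'a \<Rightarrow> bool" where
  "is_fESS X \<pi> xs \<longleftrightarrow> xs \<in> X \<and> (\<forall>x\<in>X. \<pi> xs x \<ge> \<pi> x xs)"

definition rel_payoff :: "('a \<Rightarrow> 'a \<Rightarrow> real) \<Rightarrow> 'a \<Rightarrow> 'a \<Rightarrow> real" where
  "rel_payoff \<pi> x y = \<pi> x y - \<pi> y x"

primrec imitate :: "('a \<Rightarrow> 'a \<Rightarrow> real) \<Rightarrow> 'a \<Rightarrow> (nat \<Rightarrow> 'a) \<Rightarrow> nat \<Rightarrow> 'a" where
  "imitate \<pi> y0 xs 0 = y0"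
| "imitate \<pi> y0 xs (Suc t) =
     (if rel_payoff \<pi> (xs t) (imitate \<pi> y0 xs t) > 0 then xs t else imitate \<pi> y0 xs t)"

definition no_money_pump :: "'a set \<Rightarrow> ('a \<Rightarrow> 'a \<Rightarrow> real) \<Rightarrow> bool" where
  "no_money_pump X \<pi> \<longleftrightarrow> (\<exists>M::real. M \<ge> 0 \<and>
     (\<forall>y0\<in>X. \<forall>xs. (\<forall>t. xs t \<in> X) \<longrightarrow>
        limsup (\<lambda>T. ereal (\<Sum>t\<le>T. rel_payoff \<pi> (xs t) (imitate \<pi> y0 xs t))) \<le> ereal M))"

definition money_pump :: "'a set \<Rightarrow> ('a \<Rightarrow> 'a \<Rightarrow> real) \<Rightarrow> bool" where
  "money_pump X \<pi> \<longleftrightarrow> \<not> no_money_pump X \<pi>"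

end

theory Submission
  imports Defs
begin

text \<open>Without an fESS every action is beaten by some other action, so a better-reply
  map \<open>f\<close> on \<open>X\<close> exists, and by finiteness its relative payoffs are bounded below by
  some \<open>\<delta> > 0\<close>. An opponent who always plays \<open>f\<close> of the imitator's current action is
  imitated at every step, so the imitator loses at least \<open>\<delta>\<close> in each period and the
  cumulative relative payoff of the opponent grows without bound.\<close>

lemma better_reply_if_no_fESS:
  assumes "\<not> (\<exists>x\<in>X. is_fESS X \<pi> x)"
  obtains f where "\<And>x. x \<in> X \<Longrightarrow> f x \<in> X" and "\<And>x. x \<in> X \<Longrightarrow> rel_payoff \<pi> (f x) x > 0"
proof -
  have "\<forall>x\<in>X. \<exists>y\<in>X. rel_payoff \<pi> y x > 0"
    using assms unfolding is_fESS_def rel_payoff_def by (auto simp: not_le)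
  then show thesis
    using that by metis
qed

lemma finite_positive_gap:
  fixes g :: "'a \<Rightarrow> real"
  assumes "finite X" and "\<And>x. x \<in> X \<Longrightarrow> g x > 0"
  obtains \<delta> where "\<delta> > 0" and "\<And>x. x \<in> X \<Longrightarrow> \<delta> \<le> g x"
proof (cases "X = {}")
  case True
  then show thesis
    using that[of 1] by simp
next
  case False
  show thesis
  proof (rule that[of "Min (g ` X)"])
    show "Min (g ` X) > 0"
      using assms False by (subst Min_gr_iff) auto
    show "Min (g ` X) \<le> g x" if "x \<in> X" for x
      using assms(1) that by simp
  qed
qed

lemma imitate_better_reply_orbit:
  assumes "\<And>t. rel_payoff \<pi> (f ((f ^^ t) y0)) ((f ^^ t) y0) > 0"
  shows "imitate \<pi> y0 (\<lambda>t. f ((f ^^ t) y0)) t = (f ^^ t) y0"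
  by (induction t) (simp_all add: assms)

lemma limsup_partial_sums_PInfty:
  fixes a :: "nat \<Rightarrow> real"
  assumes "\<delta> > 0" and "\<And>t. \<delta> \<le> a t"
  shows "limsup (\<lambda>T. ereal (\<Sum>t\<le>T. a t)) = \<infinity>"
proof -
  have lower: "\<delta> * real T \<le> (\<Sum>t\<le>T. a t)" for T
  proof -
    have "\<delta> * real T \<le> (\<Sum>t\<le>T. \<delta>)"
      using assms(1) by simp
    also have "\<dots> \<le> (\<Sum>t\<le>T. a t)"
      by (rule sum_mono) (rule assms(2))
    finally show ?thesis .
  qed
  have "filterlim (\<lambda>T. \<delta> * real T) at_top sequentially"
    using assms(1) filterlim_real_sequentially
    by (rule filterlim_tendsto_pos_mult_at_top[OF tendsto_const])
  then have "filterlim (\<lambda>T. \<Sum>t\<le>T. a t) at_top sequentially"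
    by (rule filterlim_at_top_mono) (simp add: lower)
  then have "(\<lambda>T. ereal (\<Sum>t\<le>T. a t)) \<longlonglongrightarrow> \<infinity>"
    by (simp add: tendsto_PInfty_eq_at_top)
  then show ?thesis
    by (simp add: lim_imp_Limsup)
qed

lemma money_pump_if_better_reply:
  assumes "finite X" and "X \<noteq> {}"
    and maps: "\<And>x. x \<in> X \<Longrightarrow> f x \<in> X"
    and better: "\<And>x. x \<in> X \<Longrightarrow> rel_payoff \<pi> (f x) x > 0"
  shows "money_pump X \<pi>"
proof -
  obtain \<delta> where "\<delta> > 0" and gap: "\<And>x. x \<in> X \<Longrightarrow> \<delta> \<le> rel_payoff \<pi> (f x) x"
    using finite_positive_gap[of X "\<lambda>x. rel_payoff \<pi> (f x) x"] assms(1) better by blast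
  obtain y0 where y0: "y0 \<in> X"
    using assms(2) by blast
  define xs where "xs t = f ((f ^^ t) y0)" for t
  have orbit: "(f ^^ t) y0 \<in> X" for t
    by (induction t) (simp_all add: y0 maps)
  then have xs_X: "\<forall>t. xs t \<in> X"
    by (simp add: xs_def maps)
  have trajectory: "imitate \<pi> y0 xs t = (f ^^ t) y0" for t
    unfolding xs_def by (rule imitate_better_reply_orbit) (simp add: better orbit)
  have "limsup (\<lambda>T. ereal (\<Sum>t\<le>T. rel_payoff \<pi> (xs t) (imitate \<pi> y0 xs t))) = \<infinity>"
    using \<open>\<delta> > 0\<close> by (rule limsup_partial_sums_PInfty) (simp add: trajectory xs_def gap orbit)
  with y0 xs_X show ?thesis
    unfolding money_pump_def no_money_pump_def by (metis PInfty_neq_ereal(1) ereal_infty_less_eq(1))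
qed

theorem corollary1:
  fixes X :: "'a set" and \<pi> :: "'a \<Rightarrow> 'a \<Rightarrow> real"
  assumes "finite X" and "X \<noteq> {}"
    and "\<not> (\<exists>x\<in>X. is_fESS X \<pi> x)"
  shows "money_pump X \<pi>"
proof -
  obtain f where "\<And>x. x \<in> X \<Longrightarrow> f x \<in> X" and "\<And>x. x \<in> X \<Longrightarrow> rel_payoff \<pi> (f x) x > 0"
    using better_reply_if_no_fESS[OF assms(3)] by blast
  with assms(1,2) show ?thesis
    by (rule money_pump_if_better_reply)
qed

end
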